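(* Let $q$ be a prime power and let $\Im$ be an $\{f,m;k-1,q\}$-minihyper in $PG(k-1,q)$ of rank $k'<k$. Let $S$ be the $(k'-1)$-dimensional projective subspace of $PG(k-1,q)$ spanned by the points of positive multiplicity of $\Im$, identified with $PG(k'-1,q)$, and let $\Im'$ be the restriction of $\Im$ to $S$, assumed to be an $\{f,m;k'-1,q\}$-minihyper in $S$ with $\mathrm{Rank}(\Im')=k'$. Then $$\mathfrak{e}(\Im)=q^{k-k'}\,\mathfrak{e}(\Im').$$
   Context: A multiset $\Im$ in $PG(k-1,q)$ is a map from the set of points of $PG(k-1,q)$ to the non-negative integers; for a set $Q$ of points, $\Im(Q)=\sum_{\mathbf{p}\in Q}\Im(\mathbf{p})$. $\Im$ is an $\{f,m;k-1,q\}$-minihyper if $\Im(PG(k-1,q))=f$, $\Im(H)\ge m$ for every hyperplane $H$, and $\Im(H_0)=m$ for some hyperplane $H_0$. The rank of $\Im$ is the rank of the $k\times f$ matrix whose columns are (fixed vector representatives of) the points of $\Im$, each repeated according to its multiplicity. $\mathfrak{e}(\Im)$ is the number of hyperplanes $H$ of the ambient projective space with $\Im(H)=m$ (for $\Im'$, the hyperplanes of $S$). *)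

theory Defs
  imports Main
begin

text \<open>Vectors of F^k are represented as functions nat => F vanishing from index k on. The field F is a finite
  field (type class), q = CARD(F).\<close>

definition vecs :: "nat \<Rightarrow> (nat \<Rightarrow> 'a::field) set" where
  "vecs k = {v. \<forall>i\<ge>k. v i = 0}"

definition line :: "(nat \<Rightarrow> 'a::field) \<Rightarrow> (nat \<Rightarrow> 'a) set" where
  "line v = {(\<lambda>i. c * v i) | c. True}"

definition pg_points :: "nat \<Rightarrow> (nat \<Rightarrow> 'a::field) set set" where
  "pg_points k = {line v | v. v \<in> vecs k \<and> v \<noteq> (\<lambda>_. 0)}"

definition pg_hyperplanes :: "nat \<Rightarrow> (nat \<Rightarrow> 'a::field) set set" where
  "pg_hyperplanes k =
     {{x \<in> vecs k. (\<Sum>i<k. a i * x i) = 0} | a. a \<in> vecs k \<and> a \<noteq> (\<lambda>_. 0)}"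

text \<open>A multiset on PG(k-1,q) is a map M from points to nat; M(Q) for a set Q of vectors
  is the total multiplicity of the points contained in Q.\<close>

definition mult_of :: "nat \<Rightarrow> ((nat \<Rightarrow> 'a::field) set \<Rightarrow> nat) \<Rightarrow> (nat \<Rightarrow> 'a) set \<Rightarrow> nat" where
  "mult_of k M Q = (\<Sum>p\<in>{p \<in> pg_points k. p \<subseteq> Q}. M p)"

definition minihyper :: "nat \<Rightarrow> nat \<Rightarrow> nat \<Rightarrow> ((nat \<Rightarrow> 'a::field) set \<Rightarrow> nat) \<Rightarrow> bool" where
  "minihyper k f m M \<longleftrightarrow>
     (\<Sum>p\<in>pg_points k. M p) = f \<and>
     (\<forall>H\<in>pg_hyperplanes k. mult_of k M H \<ge> m) \<and>
     (\<exists>H\<in>pg_hyperplanes k. mult_of k M H = m)"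

definition support_vecs :: "nat \<Rightarrow> ((nat \<Rightarrow> 'a::field) set \<Rightarrow> nat) \<Rightarrow> (nat \<Rightarrow> 'a) set" where
  "support_vecs k M = \<Union>{p \<in> pg_points k. M p > 0}"

definition lin_indep :: "(nat \<Rightarrow> 'a::field) set \<Rightarrow> bool" where
  "lin_indep B \<longleftrightarrow> finite B \<and>
     (\<forall>c. (\<forall>i. (\<Sum>v\<in>B. c v * v i) = 0) \<longrightarrow> (\<forall>v\<in>B. c v = 0))"

text \<open>Rank of the matrix whose columns are the points (with multiplicity): the maximal
  number of linearly independent vectors lying on points of positive multiplicity.\<close>

definition mh_rank :: "nat \<Rightarrow> ((nat \<Rightarrow> 'a::field) set \<Rightarrow> nat) \<Rightarrow> nat" where
  "mh_rank k M = Max {card B | B. B \<subseteq> support_vecs k M \<and> lin_indep B}"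

definition lin_span :: "(nat \<Rightarrow> 'a::field) set \<Rightarrow> (nat \<Rightarrow> 'a) set" where
  "lin_span B = {x. \<exists>c F. finite F \<and> F \<subseteq> B \<and> x = (\<lambda>i. \<Sum>v\<in>F. c v * v i)}"

definition e_count :: "nat \<Rightarrow> nat \<Rightarrow> ((nat \<Rightarrow> 'a::field) set \<Rightarrow> nat) \<Rightarrow> nat" where
  "e_count k m M = card {H \<in> pg_hyperplanes k. mult_of k M H = m}"

text \<open>phi : F^k' -> F^k linear injective map; used to identify PG(k'-1,q) with a subspace.\<close>

definition lin_embedding :: "nat \<Rightarrow> nat \<Rightarrow> ((nat \<Rightarrow> 'a::field) \<Rightarrow> (nat \<Rightarrow> 'a)) \<Rightarrow> bool" where
  "lin_embedding k' k \<phi> \<longleftrightarrow>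
     (\<forall>x\<in>vecs k'. \<phi> x \<in> vecs k) \<and> inj_on \<phi> (vecs k') \<and>
     (\<forall>x\<in>vecs k'. \<forall>y\<in>vecs k'. \<phi> (\<lambda>i. x i + y i) = (\<lambda>i. \<phi> x i + \<phi> y i)) \<and>
     (\<forall>x\<in>vecs k'. \<forall>c. \<phi> (\<lambda>i. c * x i) = (\<lambda>i. c * \<phi> x i))"

end

theory Submission
  imports Defs "HOL-Library.FuncSet" "HOL-Library.Cardinality"
begin

text \<open>Hyperplanes of PG(n-1,q) correspond to the nonzero linear forms on F^n up to the q - 1
  nonzero scalars, so it suffices to count forms. A form a on F^k pulls back along \<phi> to the
  form a \<circ> \<phi> on F^k'. Since all points of positive multiplicity lie in S = \<phi>(F^k'), the
  hyperplane ker a has the same multiplicity as the hyperplane ker (a \<circ> \<phi>) of S (or as the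
  whole of S if a \<circ> \<phi> = 0). The pullback map is linear with kernel the annihilator of S,
  which has q^(k-k') elements, and is therefore onto with all fibres of that size. The case
  a \<circ> \<phi> = 0 never has multiplicity m, because f > m: the points of positive multiplicity span
  S and so do not lie in one of its hyperplanes. Hence (q-1) e(M) = q^(k-k') (q-1) e(M').\<close>

section \<open>Linear forms and annihilators\<close>

definition dot :: "nat \<Rightarrow> (nat \<Rightarrow> 'a::field) \<Rightarrow> (nat \<Rightarrow> 'a) \<Rightarrow> 'a" where
  "dot n a x = (\<Sum>i<n. a i * x i)"

definition unit_vec :: "nat \<Rightarrow> nat \<Rightarrow> 'a::zero_neq_one" where
  "unit_vec i = (\<lambda>j. if j = i then 1 else 0)"

definition lin_subspace :: "nat \<Rightarrow> (nat \<Rightarrow> 'a::field) set \<Rightarrow> bool" where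
  "lin_subspace n W \<longleftrightarrow> W \<subseteq> vecs n \<and> (\<lambda>_. 0) \<in> W \<and>
     (\<forall>x\<in>W. \<forall>y\<in>W. (\<lambda>i. x i + y i) \<in> W) \<and> (\<forall>c. \<forall>x\<in>W. (\<lambda>i. c * x i) \<in> W)"

definition annihilator :: "nat \<Rightarrow> (nat \<Rightarrow> 'a::field) set \<Rightarrow> (nat \<Rightarrow> 'a) set" where
  "annihilator n W = {a \<in> vecs n. \<forall>w\<in>W. dot n a w = 0}"

lemma dot_zero_left [simp]: "dot n (\<lambda>_. 0) x = 0"
  and dot_zero_right [simp]: "dot n a (\<lambda>_. 0) = 0"
  by (simp_all add: dot_def)

lemma dot_Suc: "dot (Suc n) a x = dot n a x + a n * x n"
  by (simp add: dot_def)

lemma dot_upd_left [simp]: "dot n (a(n := c)) x = dot n a x"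
  unfolding dot_def by (rule sum.cong) auto

lemma dot_unit_vec: "dot n a (unit_vec i) = (if i < n then a i else 0)"
  by (simp add: dot_def unit_vec_def if_distrib cong: if_cong)

lemma dot_scale_left: "dot n (\<lambda>i. c * a i) x = c * dot n a x"
  by (simp add: dot_def sum_distrib_left mult.assoc)

lemma dot_lincomb_right:
  "dot n a (\<lambda>i. c * x i + d * y i) = c * dot n a x + d * dot n a y"
  by (simp add: dot_def sum_distrib_left sum.distrib algebra_simps)

lemma unit_vec_in_vecs: "i < n \<Longrightarrow> unit_vec i \<in> vecs n"
  by (simp add: unit_vec_def vecs_def)

lemma vecs_eq_unit_vec_expansion: "x \<in> vecs n \<Longrightarrow> x = (\<lambda>j. \<Sum>i<n. x i * unit_vec i j)"
  by (rule ext) (auto simp: unit_vec_def vecs_def if_distrib cong: if_cong)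

lemma vecs_Suc_last_zero: "w \<in> vecs (Suc n) \<Longrightarrow> w n = 0 \<Longrightarrow> w \<in> vecs n"
  unfolding vecs_def using Suc_leI le_neq_implies_less by blast

lemma nonzero_vec_coord:
  assumes "a \<in> vecs n" "a \<noteq> (\<lambda>_. 0)"
  obtains j where "j < n" "a j \<noteq> 0"
  using assms by (auto simp: vecs_def fun_eq_iff not_le[symmetric])

lemma finite_vecs [simp]: "finite (vecs n :: (nat \<Rightarrow> 'a::{field,finite}) set)"
  and card_vecs [simp]: "card (vecs n :: (nat \<Rightarrow> 'a::{field,finite}) set) = CARD('a) ^ n"
proof -
  have "bij_betw (\<lambda>v. restrict v {..<n}) (vecs n) ({..<n} \<rightarrow>\<^sub>E (UNIV :: 'a set))"
    by (rule bij_betwI[where g = "\<lambda>f i. if i < n then f i else 0"])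
      (auto simp: vecs_def fun_eq_iff PiE_def extensional_def)
  from bij_betw_finite[OF this] bij_betw_same_card[OF this]
  show "finite (vecs n :: (nat \<Rightarrow> 'a) set)" "card (vecs n :: (nat \<Rightarrow> 'a) set) = CARD('a) ^ n"
    by (simp_all add: finite_PiE card_PiE)
qed

lemma lin_subspace_lincomb:
  assumes "lin_subspace n W" "x \<in> W" "y \<in> W"
  shows "(\<lambda>i. c * x i + d * y i) \<in> W"
proof -
  have "(\<lambda>i. c * x i) \<in> W" "(\<lambda>i. d * y i) \<in> W"
    using assms by (auto simp: lin_subspace_def)
  then show ?thesis
    using assms(1) unfolding lin_subspace_def by simp
qed

lemma lin_subspace_last_zero:
  assumes "lin_subspace (Suc n) W"
  shows "lin_subspace n {w \<in> W. w n = 0}"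
  using assms vecs_Suc_last_zero by (auto simp: lin_subspace_def)

lemma lin_subspace_vecs: "lin_subspace n (vecs n)"
  by (simp add: lin_subspace_def vecs_def)

lemma subset_lin_span: "B \<subseteq> lin_span B"
proof
  fix v
  assume "v \<in> B"
  then show "v \<in> lin_span B"
    unfolding lin_span_def by (auto intro!: exI[of _ "\<lambda>_. 1"] exI[of _ "{v}"])
qed

lemma lin_span_subset:
  assumes W: "lin_subspace n W" and B: "B \<subseteq> W"
  shows "lin_span B \<subseteq> W"
proof
  fix x
  assume "x \<in> lin_span B"
  then obtain c F where F: "finite F" "F \<subseteq> B" and x: "x = (\<lambda>i. \<Sum>v\<in>F. c v * v i)"
    by (auto simp: lin_span_def)
  from F have "(\<lambda>i. \<Sum>v\<in>F. c v * v i) \<in> W"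
  proof (induction F rule: finite_induct)
    case empty
    then show ?case
      using W by (simp add: lin_subspace_def)
  next
    case (insert v F)
    then have "v \<in> W"
      using B by blast
    with insert show ?case
      using lin_subspace_lincomb[OF W, of v "\<lambda>i. \<Sum>v\<in>F. c v * v i" "c v" 1] by simp
  qed
  then show "x \<in> W"
    by (simp add: x)
qed

lemma card_annihilator_Suc_flat:
  fixes W :: "(nat \<Rightarrow> 'a::{field,finite}) set"
  assumes "W \<subseteq> vecs n"
  shows "card (annihilator (Suc n) W) = card (annihilator n W) * CARD('a)"
proof -
  have dot_Suc_W: "dot (Suc n) b w = dot n b w" if "w \<in> W" for b w
  proof -
    have "w n = 0"
      using assms that by (auto simp: vecs_def)
    then show ?thesis
      by (simp add: dot_Suc)
  qed
  have "bij_betw (\<lambda>a. (a(n := 0), a n)) (annihilator (Suc n) W) (annihilator n W \<times> UNIV)"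
  proof (rule bij_betwI[where g = "\<lambda>(b, c). b(n := c)"])
    show "(\<lambda>a. (a(n := 0), a n)) \<in> annihilator (Suc n) W \<rightarrow> annihilator n W \<times> UNIV"
      by (auto simp: annihilator_def vecs_def dot_Suc_W)
    show "(\<lambda>(b, c). b(n := c)) \<in> annihilator n W \<times> UNIV \<rightarrow> annihilator (Suc n) W"
      by (auto simp: annihilator_def vecs_def dot_Suc_W)
  qed (auto simp: annihilator_def vecs_def)
  then show ?thesis
    by (simp add: bij_betw_same_card card_cartesian_product)
qed

lemma card_subspace_Suc_pivot:
  fixes W :: "(nat \<Rightarrow> 'a::{field,finite}) set"
  assumes W: "lin_subspace (Suc n) W" and z: "z \<in> W" "z n = 1"
  shows "card W = card {w \<in> W. w n = 0} * CARD('a)"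
proof -
  have "bij_betw (\<lambda>w. ((\<lambda>i. w i - w n * z i), w n)) W ({w \<in> W. w n = 0} \<times> UNIV)"
  proof (rule bij_betwI[where g = "\<lambda>(v, c) i. v i + c * z i"])
    show "(\<lambda>w. ((\<lambda>i. w i - w n * z i), w n)) \<in> W \<rightarrow> {w \<in> W. w n = 0} \<times> UNIV"
      using lin_subspace_lincomb[OF W _ z(1), of _ 1 "- _"] z(2) by auto
    show "(\<lambda>(v, c) i. v i + c * z i) \<in> {w \<in> W. w n = 0} \<times> UNIV \<rightarrow> W"
      using lin_subspace_lincomb[OF W _ z(1), of _ 1] by auto
  qed (auto simp: z(2))
  then show ?thesis
    by (simp add: bij_betw_same_card card_cartesian_product)
qed

lemma card_annihilator_Suc_pivot:
  fixes W :: "(nat \<Rightarrow> 'a::{field,finite}) set"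
  assumes W: "lin_subspace (Suc n) W" and z: "z \<in> W" "z n = 1"
  shows "card (annihilator (Suc n) W) = card (annihilator n {w \<in> W. w n = 0})"
proof -
  have dot_via_pivot: "dot n b w = w n * dot n b z"
    if "b \<in> annihilator n {w \<in> W. w n = 0}" "w \<in> W" for b w
  proof -
    have "(\<lambda>i. w i - w n * z i) \<in> {w \<in> W. w n = 0}"
      using lin_subspace_lincomb[OF W \<open>w \<in> W\<close> z(1), of 1 "- w n"] z(2) by simp
    then have "dot n b (\<lambda>i. w i - w n * z i) = 0"
      using that(1) by (auto simp: annihilator_def)
    then show ?thesis
      using dot_lincomb_right[of n b 1 w "- w n" z] by simp
  qed
  have "bij_betw (\<lambda>a. a(n := 0)) (annihilator (Suc n) W) (annihilator n {w \<in> W. w n = 0})"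
  proof (rule bij_betwI[where g = "\<lambda>b. b(n := - dot n b z)"])
    show "(\<lambda>a. a(n := 0)) \<in> annihilator (Suc n) W \<rightarrow> annihilator n {w \<in> W. w n = 0}"
      by (auto simp: annihilator_def vecs_def dot_Suc)
    show "(\<lambda>b. b(n := - dot n b z)) \<in> annihilator n {w \<in> W. w n = 0} \<rightarrow> annihilator (Suc n) W"
    proof
      fix b
      assume b: "b \<in> annihilator n {w \<in> W. w n = 0}"
      have "dot (Suc n) (b(n := - dot n b z)) w = 0" if "w \<in> W" for w
        using dot_via_pivot[OF b that] by (simp add: dot_Suc)
      then show "b(n := - dot n b z) \<in> annihilator (Suc n) W"
        using b by (auto simp: annihilator_def vecs_def)
    qed
    show "(a(n := 0))(n := - dot n (a(n := 0)) z) = a" if "a \<in> annihilator (Suc n) W" for a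
    proof -
      have "dot n a z + a n = 0"
        using that z by (auto simp: annihilator_def dot_Suc)
      then show ?thesis
        by (auto simp: add_eq_0_iff)
    qed
    show "(b(n := - dot n b z))(n := 0) = b" if "b \<in> annihilator n {w \<in> W. w n = 0}" for b
      using that by (auto simp: annihilator_def vecs_def)
  qed
  then show ?thesis
    by (rule bij_betw_same_card)
qed

lemma card_mult_card_annihilator:
  fixes W :: "(nat \<Rightarrow> 'a::{field,finite}) set"
  assumes "lin_subspace n W"
  shows "card W * card (annihilator n W) = CARD('a) ^ n"
  using assms
proof (induction n arbitrary: W)
  case 0
  then have "W = {\<lambda>_. 0}" "annihilator 0 W = {\<lambda>_. 0}"
    by (auto simp: lin_subspace_def annihilator_def vecs_def dot_def)
  then show ?case
    by simp
next
  case (Suc n)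
  show ?case
  proof (cases "\<forall>w\<in>W. w n = 0")
    case True
    then have "{w \<in> W. w n = 0} = W"
      by blast
    then have "lin_subspace n W"
      using lin_subspace_last_zero[OF Suc.prems] by simp
    with Suc.IH show ?thesis
      by (simp add: card_annihilator_Suc_flat lin_subspace_def)
  next
    case False
    then obtain w where w: "w \<in> W" "w n \<noteq> 0"
      by blast
    define z where "z = (\<lambda>i. inverse (w n) * w i)"
    have z: "z \<in> W" "z n = 1"
      using Suc.prems w by (simp_all add: z_def lin_subspace_def)
    show ?thesis
      using Suc.IH[OF lin_subspace_last_zero[OF Suc.prems]]
      by (simp add: card_subspace_Suc_pivot[OF Suc.prems z] card_annihilator_Suc_pivot[OF Suc.prems z])
  qed
qed

section \<open>Pulling forms back along a linear embedding\<close>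

lemma card_preimage_eq_sum_fibres:
  assumes "finite A" "finite B"
  shows "card {a \<in> A. g a \<in> B} = (\<Sum>b\<in>B. card {a \<in> A. g a = b})"
proof -
  have "{a \<in> A. g a \<in> B} = (\<Union>b\<in>B. {a \<in> A. g a = b})"
    by auto
  also have "card \<dots> = (\<Sum>b\<in>B. card {a \<in> A. g a = b})"
    by (rule card_UN_disjoint) (use assms in auto)
  finally show ?thesis .
qed

definition pullback_form ::
    "((nat \<Rightarrow> 'a) \<Rightarrow> (nat \<Rightarrow> 'a)) \<Rightarrow> nat \<Rightarrow> nat \<Rightarrow> (nat \<Rightarrow> 'a::field) \<Rightarrow> (nat \<Rightarrow> 'a)" where
  "pullback_form \<phi> k k' a = (\<lambda>i. if i < k' then dot k a (\<phi> (unit_vec i)) else 0)"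

lemma pullback_form_in_vecs: "pullback_form \<phi> k k' a \<in> vecs k'"
  by (simp add: pullback_form_def vecs_def)

lemma pullback_form_zero: "pullback_form \<phi> k k' (\<lambda>_. 0) = (\<lambda>_. 0)"
  by (simp add: pullback_form_def fun_eq_iff)

lemma pullback_form_add:
  "pullback_form \<phi> k k' (\<lambda>i. a i + b i) = (\<lambda>i. pullback_form \<phi> k k' a i + pullback_form \<phi> k k' b i)"
  by (simp add: pullback_form_def dot_def algebra_simps sum.distrib fun_eq_iff)

lemma pullback_form_diff:
  "pullback_form \<phi> k k' (\<lambda>i. a i - b i) = (\<lambda>i. pullback_form \<phi> k k' a i - pullback_form \<phi> k k' b i)"
  by (simp add: pullback_form_def dot_def algebra_simps sum_subtractf fun_eq_iff)

context
  fixes \<phi> :: "(nat \<Rightarrow> 'a::field) \<Rightarrow> (nat \<Rightarrow> 'a)" and k k' :: nat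
  assumes emb: "lin_embedding k' k \<phi>"
begin

lemma embedding_in_vecs: "x \<in> vecs k' \<Longrightarrow> \<phi> x \<in> vecs k"
  and embedding_inj: "inj_on \<phi> (vecs k')"
  and embedding_add: "x \<in> vecs k' \<Longrightarrow> y \<in> vecs k' \<Longrightarrow> \<phi> (\<lambda>i. x i + y i) = (\<lambda>i. \<phi> x i + \<phi> y i)"
  and embedding_scale: "x \<in> vecs k' \<Longrightarrow> \<phi> (\<lambda>i. c * x i) = (\<lambda>i. c * \<phi> x i)"
  using emb by (simp_all add: lin_embedding_def)

lemma embedding_zero: "\<phi> (\<lambda>_. 0) = (\<lambda>_. 0)"
  using embedding_scale[of "\<lambda>_. 0" 0] by (simp add: vecs_def)

lemma embedding_eq_zero_iff: "x \<in> vecs k' \<Longrightarrow> \<phi> x = (\<lambda>_. 0) \<longleftrightarrow> x = (\<lambda>_. 0)"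
  using inj_on_eq_iff[OF embedding_inj, of x "\<lambda>_. 0"] embedding_zero by (simp add: vecs_def)

lemma embedding_sum:
  assumes "finite I" "\<And>i. i \<in> I \<Longrightarrow> v i \<in> vecs k'"
  shows "\<phi> (\<lambda>j. \<Sum>i\<in>I. c i * v i j) = (\<lambda>j. \<Sum>i\<in>I. c i * \<phi> (v i) j)"
  using assms
proof (induction I rule: finite_induct)
  case empty
  then show ?case
    using embedding_zero by simp
next
  case (insert i I)
  have "(\<lambda>j. c i * v i j) \<in> vecs k'" "(\<lambda>j. \<Sum>i\<in>I. c i * v i j) \<in> vecs k'"
    using insert.prems by (auto simp: vecs_def)
  then show ?case
    using insert embedding_add embedding_scale by simp
qed

lemma dot_embedding:
  assumes x: "x \<in> vecs k'"
  shows "dot k a (\<phi> x) = dot k' (pullback_form \<phi> k k' a) x"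
proof -
  have "\<phi> x = (\<lambda>j. \<Sum>i<k'. x i * \<phi> (unit_vec i) j)"
    by (subst vecs_eq_unit_vec_expansion[OF x], rule embedding_sum) (auto simp: unit_vec_in_vecs)
  then have "dot k a (\<phi> x) = (\<Sum>j<k. \<Sum>i<k'. a j * (x i * \<phi> (unit_vec i) j))"
    by (simp add: dot_def sum_distrib_left)
  also have "\<dots> = (\<Sum>i<k'. \<Sum>j<k. a j * (x i * \<phi> (unit_vec i) j))"
    by (rule sum.swap)
  also have "\<dots> = dot k' (pullback_form \<phi> k k' a) x"
    by (simp add: dot_def pullback_form_def sum_distrib_left mult_ac)
  finally show ?thesis .
qed

lemma pullback_form_eq_zero_iff:
  "pullback_form \<phi> k k' a = (\<lambda>_. 0) \<longleftrightarrow> (\<forall>x\<in>vecs k'. dot k a (\<phi> x) = 0)"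
proof
  assume "pullback_form \<phi> k k' a = (\<lambda>_. 0)"
  then show "\<forall>x\<in>vecs k'. dot k a (\<phi> x) = 0"
    by (simp add: dot_embedding)
next
  assume "\<forall>x\<in>vecs k'. dot k a (\<phi> x) = 0"
  then have "dot k' (pullback_form \<phi> k k' a) (unit_vec i) = 0" if "i < k'" for i
    using that by (simp add: dot_embedding unit_vec_in_vecs)
  then show "pullback_form \<phi> k k' a = (\<lambda>_. 0)"
    by (auto simp: fun_eq_iff dot_unit_vec pullback_form_def)
qed

lemma lin_subspace_embedding_image:
  assumes W: "lin_subspace k' W"
  shows "lin_subspace k (\<phi> ` W)"
  unfolding lin_subspace_def
proof (intro conjI ballI allI)
  have W_vecs: "W \<subseteq> vecs k'" and "(\<lambda>_. 0) \<in> W"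
    using W by (simp_all add: lin_subspace_def)
  then show "\<phi> ` W \<subseteq> vecs k"
    using embedding_in_vecs by blast
  show "(\<lambda>_. 0) \<in> \<phi> ` W"
    using \<open>(\<lambda>_. 0) \<in> W\<close> embedding_zero by (metis image_eqI)
  fix u v c
  assume "u \<in> \<phi> ` W" "v \<in> \<phi> ` W"
  then obtain x y where xy: "x \<in> W" "y \<in> W" "u = \<phi> x" "v = \<phi> y"
    by blast
  have "(\<lambda>i. x i + y i) \<in> W" "(\<lambda>i. c * x i) \<in> W"
    using W xy by (simp_all add: lin_subspace_def)
  moreover have "x \<in> vecs k'" "y \<in> vecs k'"
    using xy W_vecs by auto
  then have "\<phi> (\<lambda>i. x i + y i) = (\<lambda>i. u i + v i)" "\<phi> (\<lambda>i. c * x i) = (\<lambda>i. c * u i)"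
    by (simp_all add: xy embedding_add embedding_scale)
  ultimately show "(\<lambda>i. u i + v i) \<in> \<phi> ` W" "(\<lambda>i. c * u i) \<in> \<phi> ` W"
    by (metis image_eqI)+
qed

end

context
  fixes \<phi> :: "(nat \<Rightarrow> 'a::{field,finite}) \<Rightarrow> (nat \<Rightarrow> 'a)" and k k' :: nat
  assumes emb: "lin_embedding k' k \<phi>" and dim_le: "k' \<le> k"
begin

lemma card_pullback_form_kernel:
  "card {a \<in> vecs k. pullback_form \<phi> k k' a = (\<lambda>_. 0)} = CARD('a) ^ (k - k')"
proof -
  have "{a \<in> vecs k. pullback_form \<phi> k k' a = (\<lambda>_. 0)} = annihilator k (\<phi> ` vecs k')"
    by (auto simp: annihilator_def pullback_form_eq_zero_iff[OF emb])
  moreover have "card (\<phi> ` vecs k') = CARD('a) ^ k'"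
    by (simp add: card_image embedding_inj[OF emb])
  moreover have "CARD('a) ^ k = CARD('a) ^ k' * CARD('a) ^ (k - k')"
    using dim_le by (simp flip: power_add)
  ultimately show ?thesis
    using card_mult_card_annihilator[OF lin_subspace_embedding_image[OF emb lin_subspace_vecs]]
    by simp
qed

lemma card_pullback_form_fibre:
  assumes a0: "a0 \<in> vecs k"
  shows "card {a \<in> vecs k. pullback_form \<phi> k k' a = pullback_form \<phi> k k' a0} = CARD('a) ^ (k - k')"
proof -
  let ?kernel = "{a \<in> vecs k. pullback_form \<phi> k k' a = (\<lambda>_. 0)}"
  have "{a \<in> vecs k. pullback_form \<phi> k k' a = pullback_form \<phi> k k' a0} = (\<lambda>z i. a0 i + z i) ` ?kernel"
  proof (intro equalityI subsetI)
    fix a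
    assume a: "a \<in> {a \<in> vecs k. pullback_form \<phi> k k' a = pullback_form \<phi> k k' a0}"
    then have "(\<lambda>i. a i - a0 i) \<in> ?kernel"
      using a0 by (simp add: vecs_def pullback_form_diff)
    then show "a \<in> (\<lambda>z i. a0 i + z i) ` ?kernel"
      by (rule rev_image_eqI) simp
  qed (use a0 in \<open>auto simp: vecs_def pullback_form_add\<close>)
  moreover have "inj (\<lambda>z i. a0 i + z i)"
    by (rule injI) (simp add: fun_eq_iff)
  ultimately show ?thesis
    by (simp add: card_image inj_on_subset[of _ UNIV] card_pullback_form_kernel)
qed

lemma pullback_form_surj: "pullback_form \<phi> k k' ` vecs k = vecs k'"
proof -
  let ?image = "pullback_form \<phi> k k' ` vecs k"
  have image_vecs: "?image \<subseteq> vecs k'"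
    using pullback_form_in_vecs by blast
  have "{a \<in> vecs k. pullback_form \<phi> k k' a \<in> ?image} = vecs k"
    by blast
  then have "CARD('a) ^ k = card {a \<in> vecs k. pullback_form \<phi> k k' a \<in> ?image}"
    by simp
  also have "\<dots> = (\<Sum>b\<in>?image. card {a \<in> vecs k. pullback_form \<phi> k k' a = b})"
    by (rule card_preimage_eq_sum_fibres) simp_all
  also have "\<dots> = (\<Sum>b\<in>?image. CARD('a) ^ (k - k'))"
    by (rule sum.cong) (auto simp: card_pullback_form_fibre)
  also have "\<dots> = card ?image * CARD('a) ^ (k - k')"
    by simp
  finally have "card ?image * CARD('a) ^ (k - k') = CARD('a) ^ k' * CARD('a) ^ (k - k')"
    using dim_le by (simp flip: power_add)
  then have "card ?image = card (vecs k' :: (nat \<Rightarrow> 'a) set)"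
    by simp
  then show ?thesis
    using card_subset_eq[OF finite_vecs image_vecs] by simp
qed

lemma card_pullback_form_preimage:
  assumes B: "B \<subseteq> vecs k'"
  shows "card {a \<in> vecs k. pullback_form \<phi> k k' a \<in> B} = card B * CARD('a) ^ (k - k')"
proof -
  have "card {a \<in> vecs k. pullback_form \<phi> k k' a \<in> B} = (\<Sum>b\<in>B. card {a \<in> vecs k. pullback_form \<phi> k k' a = b})"
    using B finite_subset[OF B] by (intro card_preimage_eq_sum_fibres) simp_all
  also have "\<dots> = (\<Sum>b\<in>B. CARD('a) ^ (k - k'))"
  proof (rule sum.cong)
    fix b
    assume "b \<in> B"
    then obtain a0 where "a0 \<in> vecs k" "b = pullback_form \<phi> k k' a0"
      using B pullback_form_surj by blast
    then show "card {a \<in> vecs k. pullback_form \<phi> k k' a = b} = CARD('a) ^ (k - k')"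
      by (simp add: card_pullback_form_fibre)
  qed simp
  finally show ?thesis
    by simp
qed

end

section \<open>Hyperplanes and their defining forms\<close>

definition hyperplane_of :: "nat \<Rightarrow> (nat \<Rightarrow> 'a::field) \<Rightarrow> (nat \<Rightarrow> 'a) set" where
  "hyperplane_of n a = {x \<in> vecs n. dot n a x = 0}"

lemma pg_hyperplanes_eq: "pg_hyperplanes n = {hyperplane_of n a | a. a \<in> vecs n \<and> a \<noteq> (\<lambda>_. 0)}"
  by (simp add: pg_hyperplanes_def hyperplane_of_def dot_def)

lemma hyperplane_of_zero: "hyperplane_of n (\<lambda>_. 0) = vecs n"
  by (simp add: hyperplane_of_def)

lemma hyperplane_of_scale: "c \<noteq> 0 \<Longrightarrow> hyperplane_of n (\<lambda>i. c * a i) = hyperplane_of n a"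
  by (simp add: hyperplane_of_def dot_scale_left)

lemma hyperplane_of_lin_subspace: "lin_subspace n (hyperplane_of n a)"
  using dot_lincomb_right[of n a 1 _ 1] dot_lincomb_right[of n a _ _ 0]
  by (auto simp: lin_subspace_def hyperplane_of_def vecs_def)

lemma unit_vec_notin_hyperplane_of:
  "j < n \<Longrightarrow> a j \<noteq> 0 \<Longrightarrow> unit_vec j \<notin> hyperplane_of n a"
  by (simp add: hyperplane_of_def dot_unit_vec)

text \<open>Testing a on the vector a0 j e_i - a0 i e_j of the common hyperplane, where a0 j \<noteq> 0,
  gives a i = (a j / a0 j) a0 i.\<close>

lemma hyperplane_of_eq_imp_proportional:
  assumes a0: "a0 \<in> vecs n" "a0 \<noteq> (\<lambda>_. 0)" and a: "a \<in> vecs n"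
    and eq: "hyperplane_of n a = hyperplane_of n a0"
  obtains c where "a = (\<lambda>i. c * a0 i)"
proof -
  obtain j where j: "j < n" "a0 j \<noteq> 0"
    using nonzero_vec_coord[OF a0] .
  have "a i = a j / a0 j * a0 i" for i
  proof (cases "i < n")
    case True
    define x where "x = (\<lambda>l. a0 j * unit_vec i l + (- a0 i) * unit_vec j l)"
    have "x \<in> vecs n"
      using True j by (simp add: x_def vecs_def unit_vec_def)
    moreover have "dot n a0 x = 0"
      unfolding x_def dot_lincomb_right using True j by (simp add: dot_unit_vec)
    ultimately have "dot n a x = 0"
      using eq unfolding hyperplane_of_def by blast
    then have "a0 j * a i - a0 i * a j = 0"
      unfolding x_def dot_lincomb_right using True j by (simp add: dot_unit_vec)
    then show ?thesis
      using j by (simp add: field_simps)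
  next
    case False
    then show ?thesis
      using a a0 by (simp add: vecs_def)
  qed
  then show ?thesis
    using that by blast
qed

lemma card_forms_of_hyperplane:
  fixes a0 :: "nat \<Rightarrow> 'a::{field,finite}"
  assumes a0: "a0 \<in> vecs n" "a0 \<noteq> (\<lambda>_. 0)"
  shows "card {a \<in> vecs n. a \<noteq> (\<lambda>_. 0) \<and> hyperplane_of n a = hyperplane_of n a0} = CARD('a) - 1"
proof -
  obtain j where j: "j < n" "a0 j \<noteq> 0"
    using nonzero_vec_coord[OF a0] .
  have "{a \<in> vecs n. a \<noteq> (\<lambda>_. 0) \<and> hyperplane_of n a = hyperplane_of n a0}
      = (\<lambda>c i. c * a0 i) ` (UNIV - {0})"
  proof (intro equalityI subsetI)
    fix a
    assume "a \<in> {a \<in> vecs n. a \<noteq> (\<lambda>_. 0) \<and> hyperplane_of n a = hyperplane_of n a0}"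
    then obtain c where "a = (\<lambda>i. c * a0 i)" "a \<noteq> (\<lambda>_. 0)"
      using hyperplane_of_eq_imp_proportional[OF a0] by blast
    then show "a \<in> (\<lambda>c i. c * a0 i) ` (UNIV - {0})"
      by auto
  next
    fix a
    assume "a \<in> (\<lambda>c i. c * a0 i) ` (UNIV - {0})"
    then show "a \<in> {a \<in> vecs n. a \<noteq> (\<lambda>_. 0) \<and> hyperplane_of n a = hyperplane_of n a0}"
      using a0 j by (auto simp: vecs_def fun_eq_iff hyperplane_of_scale)
  qed
  moreover have "inj_on (\<lambda>c i. c * a0 i) (UNIV - {0})"
    using j by (intro inj_onI) (simp add: fun_eq_iff, metis mult_right_cancel)
  ultimately show ?thesis
    by (simp add: card_image card_Diff_singleton)
qed

lemma finite_pg_hyperplanes: "finite (pg_hyperplanes n :: (nat \<Rightarrow> 'a::{field,finite}) set set)"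
  by (rule finite_subset[of _ "Pow (vecs n)"]) (auto simp: pg_hyperplanes_def)

lemma card_forms_of_mult:
  fixes M :: "(nat \<Rightarrow> 'a::{field,finite}) set \<Rightarrow> nat"
  shows "card {a \<in> vecs n. a \<noteq> (\<lambda>_. 0) \<and> mult_of n M (hyperplane_of n a) = m}
    = (CARD('a) - 1) * e_count n m M"
proof -
  let ?E = "{H \<in> pg_hyperplanes n. mult_of n M H = m}"
  let ?forms = "\<lambda>H. {a \<in> vecs n. a \<noteq> (\<lambda>_. 0) \<and> hyperplane_of n a = H}"
  have "{a \<in> vecs n. a \<noteq> (\<lambda>_. 0) \<and> mult_of n M (hyperplane_of n a) = m} = (\<Union>H\<in>?E. ?forms H)"
    by (auto simp: pg_hyperplanes_eq)
  also have "card \<dots> = (\<Sum>H\<in>?E. card (?forms H))"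
    using finite_pg_hyperplanes[of n] by (intro card_UN_disjoint) auto
  also have "\<dots> = (\<Sum>H\<in>?E. CARD('a) - 1)"
    by (rule sum.cong) (auto simp: pg_hyperplanes_eq card_forms_of_hyperplane)
  finally show ?thesis
    by (simp add: e_count_def)
qed

section \<open>Points and multiplicities in the image of the embedding\<close>

lemma line_eq_range: "line v = range (\<lambda>c i. c * v i)"
  by (auto simp: line_def)

lemma mem_line_self: "v \<in> line v"
  unfolding line_def by (auto intro: exI[of _ 1])

lemma pg_point_subset_vecs: "p \<in> pg_points n \<Longrightarrow> p \<subseteq> vecs n"
  by (auto simp: pg_points_def line_def vecs_def)

lemma finite_pg_points: "finite (pg_points n :: (nat \<Rightarrow> 'a::{field,finite}) set set)"
  by (rule finite_subset[of _ "Pow (vecs n)"]) (auto dest: pg_point_subset_vecs)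

lemma mult_of_vecs: "mult_of n M (vecs n) = (\<Sum>p\<in>pg_points n. M p)"
proof -
  have "{p \<in> pg_points n. p \<subseteq> vecs n} = pg_points n"
    using pg_point_subset_vecs by blast
  then show ?thesis
    unfolding mult_of_def by (rule arg_cong)
qed

context
  fixes \<phi> :: "(nat \<Rightarrow> 'a::field) \<Rightarrow> (nat \<Rightarrow> 'a)" and k k' :: nat
  assumes emb: "lin_embedding k' k \<phi>"
begin

lemma embedding_image_line: "v \<in> vecs k' \<Longrightarrow> \<phi> ` line v = line (\<phi> v)"
  by (simp add: line_eq_range image_image embedding_scale[OF emb])

lemma embedding_image_pg_point:
  assumes "p \<in> pg_points k'"
  shows "\<phi> ` p \<in> pg_points k"
proof -
  obtain v where v: "v \<in> vecs k'" "v \<noteq> (\<lambda>_. 0)" "p = line v"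
    using assms by (auto simp: pg_points_def)
  then have "\<phi> ` p = line (\<phi> v)" "\<phi> v \<in> vecs k" "\<phi> v \<noteq> (\<lambda>_. 0)"
    by (simp_all add: embedding_image_line embedding_in_vecs[OF emb] embedding_eq_zero_iff[OF emb])
  then show ?thesis
    unfolding pg_points_def by blast
qed

lemma pg_point_in_embedding_image:
  assumes p: "p \<in> pg_points k" and p_sub: "p \<subseteq> \<phi> ` vecs k'"
  obtains p' where "p' \<in> pg_points k'" "p = \<phi> ` p'"
proof -
  obtain w where w: "w \<noteq> (\<lambda>_. 0)" "p = line w"
    using p by (auto simp: pg_points_def)
  have "w \<in> \<phi> ` vecs k'"
    using p_sub mem_line_self[of w] unfolding w(2) by (rule subsetD)
  then obtain v where v: "v \<in> vecs k'" "w = \<phi> v"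
    by (rule imageE)
  then have "v \<noteq> (\<lambda>_. 0)"
    using w(1) embedding_zero[OF emb] by blast
  with v(1) have "line v \<in> pg_points k'"
    unfolding pg_points_def by blast
  moreover have "p = \<phi> ` line v"
    by (simp add: w(2) v embedding_image_line)
  ultimately show ?thesis
    by (rule that)
qed

lemma inj_on_embedding_image_pg_points: "inj_on ((`) \<phi>) (pg_points k')"
proof (rule inj_onI)
  fix p q
  assume p: "p \<in> pg_points k'" and q: "q \<in> pg_points k'" and eq: "\<phi> ` p = \<phi> ` q"
  show "p = q"
    using inj_on_image_eq_iff[OF embedding_inj[OF emb] pg_point_subset_vecs[OF p]
        pg_point_subset_vecs[OF q]] eq by simp
qed

lemma embedding_vimage_hyperplane_of:
  "{x \<in> vecs k'. \<phi> x \<in> hyperplane_of k a} = hyperplane_of k' (pullback_form \<phi> k k' a)"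
proof -
  have "\<phi> x \<in> hyperplane_of k a \<longleftrightarrow> x \<in> hyperplane_of k' (pullback_form \<phi> k k' a)"
    if "x \<in> vecs k'" for x
    using that by (simp add: hyperplane_of_def embedding_in_vecs[OF emb] dot_embedding[OF emb])
  then show ?thesis
    by (auto simp: hyperplane_of_def)
qed

end

context
  fixes M :: "(nat \<Rightarrow> 'a::{field,finite}) set \<Rightarrow> nat"
    and \<phi> :: "(nat \<Rightarrow> 'a) \<Rightarrow> (nat \<Rightarrow> 'a)"
    and k k' :: nat
  assumes emb: "lin_embedding k' k \<phi>"
    and S: "\<phi> ` vecs k' = lin_span (support_vecs k M)"
begin

lemma support_point_subset_image: "p \<in> pg_points k \<Longrightarrow> M p > 0 \<Longrightarrow> p \<subseteq> \<phi> ` vecs k'"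
  using subset_lin_span[of "support_vecs k M"] by (auto simp: S support_vecs_def)

lemma mult_of_restriction:
  "mult_of k M H = mult_of k' (\<lambda>p. M (\<phi> ` p)) {x \<in> vecs k'. \<phi> x \<in> H}"
proof -
  let ?Q = "{x \<in> vecs k'. \<phi> x \<in> H}"
  let ?A = "{p \<in> pg_points k. p \<subseteq> H \<and> p \<subseteq> \<phi> ` vecs k'}"
  have "mult_of k M H = sum M ?A"
    unfolding mult_of_def
  proof (rule sum.mono_neutral_right)
    show "finite {p \<in> pg_points k. p \<subseteq> H}"
      using finite_pg_points[of k] by (rule finite_subset[rotated]) blast
    show "\<forall>p \<in> {p \<in> pg_points k. p \<subseteq> H} - ?A. M p = 0"
      using support_point_subset_image by auto
  qed blast
  also have "?A = (`) \<phi> ` {p' \<in> pg_points k'. p' \<subseteq> ?Q}"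
  proof (intro equalityI subsetI)
    fix p
    assume p: "p \<in> ?A"
    then obtain p' where p': "p' \<in> pg_points k'" "p = \<phi> ` p'"
      using pg_point_in_embedding_image[OF emb] by blast
    then have "p' \<subseteq> ?Q"
      using p pg_point_subset_vecs[OF p'(1)] by blast
    with p' show "p \<in> (`) \<phi> ` {p' \<in> pg_points k'. p' \<subseteq> ?Q}"
      by blast
  next
    fix p
    assume "p \<in> (`) \<phi> ` {p' \<in> pg_points k'. p' \<subseteq> ?Q}"
    then obtain p' where "p' \<in> pg_points k'" "p' \<subseteq> ?Q" "p = \<phi> ` p'"
      by blast
    then show "p \<in> ?A"
      using embedding_image_pg_point[OF emb] pg_point_subset_vecs by blast
  qed
  also have "sum M \<dots> = mult_of k' (\<lambda>p. M (\<phi> ` p)) ?Q"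
    unfolding mult_of_def
    using inj_on_subset[OF inj_on_embedding_image_pg_points[OF emb]]
    by (subst sum.reindex) auto
  finally show ?thesis .
qed

text \<open>The points of positive multiplicity span the image of \<phi>, so they cannot all lie in
  a hyperplane of PG(k'-1,q).\<close>

lemma mult_of_hyperplane_less_total:
  assumes H: "H \<in> pg_hyperplanes k'"
  shows "mult_of k' (\<lambda>p. M (\<phi> ` p)) H < (\<Sum>p\<in>pg_points k'. M (\<phi> ` p))"
proof -
  obtain b where b: "b \<in> vecs k'" "b \<noteq> (\<lambda>_. 0)" "H = hyperplane_of k' b"
    using H by (auto simp: pg_hyperplanes_eq)
  obtain j where j: "j < k'" "b j \<noteq> 0"
    using nonzero_vec_coord[OF b(1,2)] .
  have "\<not> support_vecs k M \<subseteq> \<phi> ` H"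
  proof
    assume "support_vecs k M \<subseteq> \<phi> ` H"
    then have "\<phi> ` vecs k' \<subseteq> \<phi> ` H"
      unfolding S b(3)
      by (rule lin_span_subset[OF lin_subspace_embedding_image[OF emb hyperplane_of_lin_subspace]])
    then obtain y where y: "y \<in> H" "\<phi> (unit_vec j) = \<phi> y"
      using unit_vec_in_vecs[OF j(1)] by blast
    then have "unit_vec j = y"
      using inj_onD[OF embedding_inj[OF emb]] unit_vec_in_vecs[OF j(1)] b(3)
      by (auto simp: hyperplane_of_def)
    then show False
      using y(1) b(3) unit_vec_notin_hyperplane_of[of j k' b, OF j] by simp
  qed
  then obtain p v where p: "p \<in> pg_points k" "M p > 0" and v: "v \<in> p" "v \<notin> \<phi> ` H"
    by (auto simp: support_vecs_def)
  obtain p' where p': "p' \<in> pg_points k'" "p = \<phi> ` p'"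
    using pg_point_in_embedding_image[OF emb p(1) support_point_subset_image[OF p]] .
  let ?inH = "{p \<in> pg_points k'. p \<subseteq> H}"
  have "p' \<notin> ?inH"
    using v p'(2) by blast
  moreover have "finite ?inH"
    using finite_pg_points[of k'] by (rule finite_subset[rotated]) blast
  ultimately have "mult_of k' (\<lambda>p. M (\<phi> ` p)) H + M (\<phi> ` p') = (\<Sum>p\<in>insert p' ?inH. M (\<phi> ` p))"
    by (simp add: mult_of_def)
  also have "\<dots> \<le> (\<Sum>p\<in>pg_points k'. M (\<phi> ` p))"
    using p'(1) by (intro sum_mono2 finite_pg_points) auto
  finally show ?thesis
    using p p' by simp
qed

end

lemma card_field_ge_two: "2 \<le> CARD('a::{field,finite})"
proof -
  have "card {0, 1 :: 'a} \<le> CARD('a)"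
    by (rule card_mono) simp_all
  then show ?thesis
    by simp
qed

theorem lemma6:
  fixes M :: "(nat \<Rightarrow> 'a::{field,finite}) set \<Rightarrow> nat"
    and \<phi> :: "(nat \<Rightarrow> 'a) \<Rightarrow> (nat \<Rightarrow> 'a)"
    and k k' f m :: nat
  assumes mh: "minihyper k f m M"
    and rk: "mh_rank k M = k'"
    and lt: "k' < k"
    and emb: "lin_embedding k' k \<phi>"
    and S: "\<phi> ` vecs k' = lin_span (support_vecs k M)"
    and mh': "minihyper k' f m (\<lambda>p. M (\<phi> ` p))"
    and rk': "mh_rank k' (\<lambda>p. M (\<phi> ` p)) = k'"
  shows "e_count k m M = card (UNIV :: 'a set) ^ (k - k') * e_count k' m (\<lambda>p. M (\<phi> ` p))"
proof -
  let ?M' = "\<lambda>p. M (\<phi> ` p)" and ?pb = "pullback_form \<phi> k k'"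
  let ?minimal = "{b \<in> vecs k'. b \<noteq> (\<lambda>_. 0) \<and> mult_of k' ?M' (hyperplane_of k' b) = m}"
  have "m < f"
    using mh' mult_of_hyperplane_less_total[OF emb S] by (auto simp: minihyper_def)
  then have zero_not_minimal: "mult_of k' ?M' (hyperplane_of k' (\<lambda>_. 0)) \<noteq> m"
    using mh' by (simp add: hyperplane_of_zero mult_of_vecs minihyper_def)
  have "(CARD('a) - 1) * e_count k m M
      = card {a \<in> vecs k. a \<noteq> (\<lambda>_. 0) \<and> mult_of k M (hyperplane_of k a) = m}"
    by (rule card_forms_of_mult[symmetric])
  \<comment> \<open>a and ?pb a cut out hyperplanes of equal multiplicity; ?pb a = 0 (e.g. for a = 0) gives f.\<close>
  also have "\<dots> = card {a \<in> vecs k. ?pb a \<in> ?minimal}"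
    using zero_not_minimal pullback_form_zero[of \<phi> k k']
    by (auto simp: mult_of_restriction[OF emb S] embedding_vimage_hyperplane_of[OF emb]
        pullback_form_in_vecs intro!: arg_cong[where f = card])
  also have "\<dots> = card ?minimal * CARD('a) ^ (k - k')"
    using lt by (intro card_pullback_form_preimage[OF emb]) auto
  also have "\<dots> = (CARD('a) - 1) * (CARD('a) ^ (k - k') * e_count k' m ?M')"
    by (simp add: card_forms_of_mult)
  finally show ?thesis
    using card_field_ge_two[where 'a = 'a] by simp
qed

end
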